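(* Let $\gamma>0$ and let $S_\gamma:=\mathfrak{B}^\gamma_{RBF}\circ\mathsf{F}_{2/\gamma^2}\circ(\mathfrak{B}^\gamma_{RBF})^{-1}:\mathcal{H}_\gamma\to\mathcal{H}_\gamma$. Then $$S_\gamma=\mathcal{M}^{-\gamma^2}_{RBF}\circ\mathcal{C}_\phi\circ\mathcal{M}^{\gamma^2}_{RBF},$$ where $\phi(z)=-iz$ and $\mathcal{C}_\phi g(z)=g(-iz)$ is the composition operator on $\mathcal{F}_{2/\gamma^2}$.
   Context: For $\alpha>0$, $\mathsf{F}_\alpha$ is the Fourier transform on $L^2(\mathbb{R})$ given by $\mathsf{F}_\alpha\varphi(\lambda)=\sqrt{\frac{\alpha}{2\pi}}\int_{\mathbb{R}}e^{-i\alpha\lambda x}\varphi(x)dx$. $\mathcal{F}_\alpha$ is the Fock space of entire $g$ with $\frac{\alpha}{\pi}\int_{\mathbb{C}}|g|^2e^{-\alpha|z|^2}dA<\infty$. $\mathcal{H}_\gamma$ is the Hilbert space of entire $f$ with $\frac{2}{\pi\gamma^2}\int_{\mathbb{C}}|f(z)|^2\exp\left(\frac{(z-\overline z)^2}{\gamma^2}\right)dA(z)<\infty$. $\mathcal{M}^{\gamma^2}_{RBF}f=e^{z^2/\gamma^2}f$ maps $\mathcal{H}_\gamma$ onto $\mathcal{F}_{2/\gamma^2}$, and $\mathcal{M}^{-\gamma^2}_{RBF}g=e^{-z^2/\gamma^2}g$ maps $\mathcal{F}_{2/\gamma^2}$ onto $\mathcal{H}_\gamma$. $\mathfrak{B}^\gamma_{RBF}:L^2(\mathbb{R})\to\mathcal{H}_\gamma$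 is the unitary RBF Segal–Bargmann transform $\mathfrak{B}^\gamma_{RBF}[\varphi](z)=\int_{\mathbb{R}}\mathcal{A}^\gamma_{RBF}(z,x)\varphi(x)dx$ with $\mathcal{A}^\gamma_{RBF}(z,x)=\sum_{n\ge0}e_n^\gamma(z)\psi_n^{2/\gamma^2}(x)$, $e_n^\gamma(z)=\sqrt{\frac{2^n}{\gamma^{2n}n!}}z^n\exp(-z^2/\gamma^2)$, $\psi_n^\alpha(x)=\left(\frac{\alpha}{\pi}\right)^{1/4}(2^nn!)^{-1/2}H_n(\sqrt\alpha x)e^{-\alpha x^2/2}$ ($H_n$ physicists' Hermite polynomials). *)

theory Defs
  imports "HOL-Analysis.Analysis"
begin

fun hermite :: "nat \<Rightarrow> real \<Rightarrow> real" where
  "hermite 0 x = 1"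
| "hermite (Suc 0) x = 2 * x"
| "hermite (Suc (Suc n)) x = 2 * x * hermite (Suc n) x - 2 * real (Suc n) * hermite n x"

definition L2R :: "(real \<Rightarrow> complex) set" where
  "L2R = {\<phi>. \<phi> \<in> borel_measurable lborel \<and> integrable lborel (\<lambda>x. (cmod (\<phi> x))\<^sup>2)}"

text \<open>Fourier transform F_alpha on L^2(R) (Plancherel extension):
  \<psi> is F_alpha \<phi> iff the truncated integrals converge to \<psi> in L^2.\<close>
definition fourier_L2 :: "real \<Rightarrow> (real \<Rightarrow> complex) \<Rightarrow> (real \<Rightarrow> complex) \<Rightarrow> bool" where
  "fourier_L2 \<alpha> \<phi> \<psi> \<longleftrightarrow> \<psi> \<in> L2R \<and>
     ((\<lambda>R::real. LINT t|lborel. (cmod (\<psi> t - complex_of_real (sqrt (\<alpha> / (2 * pi))) *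
          (LINT x|lborel. indicator {-R..R} x * (exp (- \<i> * complex_of_real (\<alpha> * t * x)) * \<phi> x))))\<^sup>2)
      \<longlongrightarrow> 0) at_top"

definition H_space :: "real \<Rightarrow> (complex \<Rightarrow> complex) set" where
  "H_space \<gamma> = {f. f holomorphic_on UNIV \<and>
     integrable lborel (\<lambda>z. (cmod (f z))\<^sup>2 * exp (Re ((z - cnj z)\<^sup>2) / \<gamma>\<^sup>2))}"

definition Fock_space :: "real \<Rightarrow> (complex \<Rightarrow> complex) set" where
  "Fock_space \<alpha> = {g. g holomorphic_on UNIV \<and>
     integrable lborel (\<lambda>z. (cmod (g z))\<^sup>2 * exp (- \<alpha> * (cmod z)\<^sup>2))}"

definition e_fun :: "real \<Rightarrow> nat \<Rightarrow> complex \<Rightarrow> complex" where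
  "e_fun \<gamma> n z = complex_of_real (sqrt (2 ^ n / (\<gamma> ^ (2 * n) * fact n))) * z ^ n * exp (- z\<^sup>2 / complex_of_real (\<gamma>\<^sup>2))"

definition psi_fun :: "real \<Rightarrow> nat \<Rightarrow> real \<Rightarrow> real" where
  "psi_fun \<alpha> n x = (\<alpha> / pi) powr (1/4) * (2 ^ n * fact n) powr (-1/2) *
     hermite n (sqrt \<alpha> * x) * exp (- \<alpha> * x\<^sup>2 / 2)"

definition RBF_kernel :: "real \<Rightarrow> complex \<Rightarrow> real \<Rightarrow> complex" where
  "RBF_kernel \<gamma> z x = (\<Sum>n. e_fun \<gamma> n z * complex_of_real (psi_fun (2 / \<gamma>\<^sup>2) n x))"

definition RBF_SB :: "real \<Rightarrow> (real \<Rightarrow> complex) \<Rightarrow> complex \<Rightarrow> complex" where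
  "RBF_SB \<gamma> \<phi> z = (LINT x|lborel. RBF_kernel \<gamma> z x * \<phi> x)"

definition M_RBF :: "real \<Rightarrow> (complex \<Rightarrow> complex) \<Rightarrow> complex \<Rightarrow> complex" where
  "M_RBF \<gamma> f z = exp (z\<^sup>2 / complex_of_real (\<gamma>\<^sup>2)) * f z"

definition M_RBF_inv :: "real \<Rightarrow> (complex \<Rightarrow> complex) \<Rightarrow> complex \<Rightarrow> complex" where
  "M_RBF_inv \<gamma> g z = exp (- z\<^sup>2 / complex_of_real (\<gamma>\<^sup>2)) * g z"

definition comp_op :: "(complex \<Rightarrow> complex) \<Rightarrow> (complex \<Rightarrow> complex) \<Rightarrow> complex \<Rightarrow> complex" where
  "comp_op \<phi> g z = g (\<phi> z)"

end

theory Submission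
  imports Defs "HOL-Probability.Probability" "HOL-Complex_Analysis.Complex_Analysis"
begin

text \<open>By the generating function of the Hermite polynomials, the kernel of the RBF
  Segal--Bargmann transform is an explicit Gaussian in \<open>x\<close>:
  \<open>A(z, x) = c exp (- 2 z^2 / \<gamma>^2) exp (- \<alpha> x^2 / 2 + 2 sqrt 2 z x / \<gamma>^2)\<close> with
  \<open>\<alpha> = 2 / \<gamma>^2\<close>. Its Fourier integral in \<open>x\<close> is again such a Gaussian, namely
  \<open>exp (- z^2 / \<gamma>^2) exp ((-i z)^2 / \<gamma>^2) A(-i z, \<cdot>)\<close> up to normalisation, and this is
  the theorem once \<open>\<integral> A(z, t) \<psi>(t) dt\<close> is known to equal the pairing of \<open>\<phi>\<close> with the
  Fourier integral of \<open>A(z, \<cdot>)\<close>.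

  Since \<open>\<psi>\<close> is only the \<open>L^2\<close>-limit of the transforms \<open>\<psi>\<^sub>R\<close> of the truncations
  \<open>\<phi> \<cdot> 1[-R, R]\<close>, that pairing identity is obtained in the limit \<open>R \<rightarrow> \<infinity>\<close>: the \<open>\<psi>\<^sub>R\<close> are
  square integrable by a Plancherel inequality (proved by Gaussian damping and a Schur test),
  pairing with the kernel is \<open>L^2\<close>-continuous, the multiplication formula moves the transform
  from the truncation onto the kernel, and dominated convergence removes the truncation.\<close>

section \<open>Gaussian integrals\<close>

definition gaussian :: "real \<Rightarrow> complex \<Rightarrow> real \<Rightarrow> complex" where
  "gaussian a b x = exp (- (of_real a * (of_real x)\<^sup>2) / 2 + b * of_real x)"

lemma borel_measurable_gaussian [measurable]: "gaussian a b \<in> borel_measurable borel"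
  unfolding gaussian_def[abs_def] by measurable

lemma gaussian_mult: "gaussian a b x * gaussian a' b' x = gaussian (a + a') (b + b') x"
  unfolding gaussian_def exp_add[symmetric]
  by (rule arg_cong[where f = exp]) (simp add: divide_simps algebra_simps)

lemma gaussian_mult_exp: "gaussian a b x * exp (c * of_real x) = gaussian a (b + c) x"
  unfolding gaussian_def by (simp add: exp_add[symmetric] algebra_simps)

lemma gaussian_zero: "gaussian a 0 x = of_real (exp (- (a * x\<^sup>2) / 2))"
  unfolding gaussian_def by (simp flip: exp_of_real)

lemma has_bochner_integral_lborel_real_affine_iff:
  fixes f :: "real \<Rightarrow> 'a :: {banach, second_countable_topology}"
  assumes "c \<noteq> 0"
  shows "has_bochner_integral lborel f i \<longleftrightarrow>
    has_bochner_integral lborel (\<lambda>x. f (t + c * x)) (i /\<^sub>R \<bar>c\<bar>)"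
  using assms unfolding has_bochner_integral_iff lborel_integrable_real_affine_iff[OF assms]
  by (simp_all add: lborel_integral_real_affine[OF assms, of f t] divideR_right cong: conj_cong)

lemma has_bochner_integral_std_gaussian:
  "has_bochner_integral lborel (gaussian 1 (\<i> * of_real t)) (of_real (sqrt (2 * pi) * exp (- t\<^sup>2 / 2)))"
proof -
  let ?g = "\<lambda>x. std_normal_density x *\<^sub>R exp (\<i> * of_real (t * x))"
  have density: "gaussian 1 (\<i> * of_real t) x = of_real (sqrt (2 * pi)) * ?g x" for x
  proof -
    have "gaussian 1 (\<i> * of_real t) x = of_real (exp (- x\<^sup>2 / 2)) * exp (\<i> * of_real (t * x))"
      unfolding gaussian_def exp_of_real[symmetric] exp_add[symmetric]
      by (rule arg_cong[where f = exp]) simp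
    then show ?thesis
      by (simp add: std_normal_density_def scaleR_conv_of_real)
  qed
  have "integrable lborel ?g"
    by (rule Bochner_Integration.integrable_bound[OF integrable_normal_density[where \<mu>=0 and \<sigma>=1]])
      (auto simp: norm_mult)
  moreover have "integral\<^sup>L lborel ?g = of_real (exp (- t\<^sup>2 / 2))"
    using char_std_normal_distribution
    by (simp add: char_def integral_density normal_density_nonneg fun_eq_iff)
  ultimately have "has_bochner_integral lborel ?g (of_real (exp (- t\<^sup>2 / 2)))"
    by (simp add: has_bochner_integral_iff)
  from has_bochner_integral_mult_right[OF this, of "of_real (sqrt (2 * pi))"]
  show ?thesis
    unfolding density by simp
qed

lemma has_bochner_integral_gaussian:
  assumes "a > 0"
  shows "has_bochner_integral lborel (gaussian a b)
           (of_real (sqrt (2 * pi / a)) * exp (b\<^sup>2 / (2 * of_real a)))"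
proof -
  define p q s where "p = Re b" and "q = Im b" and "s = sqrt a"
  have s: "s > 0" and a: "a = s * s"
    using assms by (auto simp: s_def)
  have b: "b = of_real p + \<i> * of_real q"
    by (simp add: p_def q_def complex_eq)
  define C where "C = exp (of_real (p\<^sup>2 / (2 * a)) + \<i> * of_real (q * p / a))"
  \<comment> \<open>Completing the square reduces to the characteristic function of the standard normal.\<close>
  have shift: "gaussian a b (p / a + inverse s * y) = C * gaussian 1 (\<i> * of_real (q / s)) y" for y
    unfolding gaussian_def C_def exp_add[symmetric]
    by (rule arg_cong[where f = exp]) (use s in \<open>simp add: a b field_simps power2_eq_square\<close>)
  have rescaled: "s *\<^sub>R (of_real (sqrt (2 * pi / a)) * exp (b\<^sup>2 / (2 * of_real a))) =
      C * of_real (sqrt (2 * pi) * exp (- (q / s)\<^sup>2 / 2))"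
  proof -
    have exponent: "exp (b\<^sup>2 / (2 * of_real a)) = C * of_real (exp (- (q / s)\<^sup>2 / 2))"
      unfolding C_def exp_of_real[symmetric] exp_add[symmetric]
      by (rule arg_cong[where f = exp]) (use s in \<open>simp add: a b field_simps power2_eq_square\<close>)
    have root: "s * sqrt (2 * pi / a) = sqrt (2 * pi)"
      using s by (simp add: a real_sqrt_divide real_sqrt_mult)
    have "s *\<^sub>R (of_real (sqrt (2 * pi / a)) * exp (b\<^sup>2 / (2 * of_real a))) =
        of_real (s * sqrt (2 * pi / a)) * exp (b\<^sup>2 / (2 * of_real a))"
      by (simp add: scaleR_conv_of_real)
    then show ?thesis
      unfolding root exponent by (simp only: of_real_mult mult_ac)
  qed
  define I where "I = of_real (sqrt (2 * pi / a)) * exp (b\<^sup>2 / (2 * of_real a))"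
  have "has_bochner_integral lborel (\<lambda>y. gaussian a b (p / a + inverse s * y)) (s *\<^sub>R I)"
    unfolding shift I_def rescaled
    by (rule has_bochner_integral_mult_right[OF has_bochner_integral_std_gaussian])
  moreover have "I /\<^sub>R \<bar>inverse s\<bar> = s *\<^sub>R I"
    using s by simp
  ultimately show ?thesis
    using has_bochner_integral_lborel_real_affine_iff[of "inverse s" "gaussian a b" I "p / a"] s
    unfolding I_def by simp
qed

lemma integrable_gaussian: "a > 0 \<Longrightarrow> integrable lborel (gaussian a b)"
  using has_bochner_integral_gaussian by (simp add: has_bochner_integral_iff)

lemma integral_gaussian:
  "a > 0 \<Longrightarrow> integral\<^sup>L lborel (gaussian a b) = of_real (sqrt (2 * pi / a)) * exp (b\<^sup>2 / (2 * of_real a))"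
  using has_bochner_integral_gaussian by (simp add: has_bochner_integral_iff)

lemma has_bochner_integral_real_gaussian:
  assumes "a > 0"
  shows "has_bochner_integral lborel (\<lambda>x. exp (- (a * x\<^sup>2) / 2)) (sqrt (2 * pi / a))"
  using has_bochner_integral_Re[OF has_bochner_integral_gaussian[OF assms, of 0]]
  by (simp add: gaussian_zero)

lemma integrable_exp_neg_mult_square:
  "(\<epsilon>::real) > 0 \<Longrightarrow> integrable lborel (\<lambda>t. exp (- \<epsilon> * t\<^sup>2))"
  using has_bochner_integral_real_gaussian[of "2 * \<epsilon>"] by (simp add: has_bochner_integral_iff)

section \<open>The generating function of the Hermite polynomials\<close>

text \<open>A copy of \<^const>\<open>hermite\<close> at complex arguments: the Taylor coefficients of the
  generating function in \<open>t\<close> are obtained from its derivatives, which involve \<open>H\<^sub>n (y - t)\<close>.\<close>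

fun chermite :: "nat \<Rightarrow> complex \<Rightarrow> complex" where
  "chermite 0 x = 1"
| "chermite (Suc 0) x = 2 * x"
| "chermite (Suc (Suc n)) x = 2 * x * chermite (Suc n) x - 2 * of_nat (Suc n) * chermite n x"

lemma chermite_of_real: "chermite n (of_real x) = of_real (hermite n x)"
  by (induction n x rule: hermite.induct) auto

lemma chermite_Suc: "chermite (Suc n) x = 2 * x * chermite n x - 2 * of_nat n * chermite (n - 1) x"
  by (cases n) auto

lemma has_field_derivative_chermite:
  "(chermite n has_field_derivative 2 * of_nat n * chermite (n - 1) w) (at w)"
proof (induction n w rule: chermite.induct)
  case (1 w)
  show ?case by simp
next
  case (2 w)
  have "chermite (Suc 0) = (\<lambda>x. 2 * x)"
    by auto
  then show ?case
    by (auto intro!: derivative_eq_intros)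
next
  case (3 n w)
  have "chermite (Suc (Suc n)) = (\<lambda>x. 2 * x * chermite (Suc n) x - 2 * of_nat (Suc n) * chermite n x)"
    by auto
  moreover have "((\<lambda>x. 2 * x * chermite (Suc n) x - 2 * of_nat (Suc n) * chermite n x)
      has_field_derivative 2 * chermite (Suc n) w + 2 * w * (2 * of_nat (Suc n) * chermite n w)
        - 2 * of_nat (Suc n) * (2 * of_nat n * chermite (n - 1) w)) (at w)"
    by (rule derivative_eq_intros 3 refl | simp)+
  moreover have "2 * chermite (Suc n) w + 2 * w * (2 * of_nat (Suc n) * chermite n w)
        - 2 * of_nat (Suc n) * (2 * of_nat n * chermite (n - 1) w)
      = 2 * of_nat (Suc (Suc n)) * chermite (Suc (Suc n) - 1) w"
    unfolding diff_Suc_1 chermite_Suc[of n w] by (simp add: algebra_simps)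
  ultimately show ?case
    by simp
qed

lemma higher_deriv_hermite_generating_function:
  "(deriv ^^ n) (\<lambda>t. exp (2 * y * t - t\<^sup>2)) = (\<lambda>t. chermite n (y - t) * exp (2 * y * t - t\<^sup>2))"
proof (induction n)
  case 0
  show ?case by simp
next
  case (Suc n)
  have "((\<lambda>t. chermite n (y - t) * exp (2 * y * t - t\<^sup>2))
      has_field_derivative chermite (Suc n) (y - t) * exp (2 * y * t - t\<^sup>2)) (at t)" for t
  proof -
    have "((\<lambda>t. chermite n (y - t)) has_field_derivative
        2 * of_nat n * chermite (n - 1) (y - t) * - 1) (at t)"
      by (rule DERIV_chain2[OF has_field_derivative_chermite]) (auto intro!: derivative_eq_intros)
    moreover have "((\<lambda>t. exp (2 * y * t - t\<^sup>2)) has_field_derivative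
        (2 * y - 2 * t) * exp (2 * y * t - t\<^sup>2)) (at t)"
      by (auto intro!: derivative_eq_intros simp: power2_eq_square algebra_simps)
    ultimately have "((\<lambda>t. chermite n (y - t) * exp (2 * y * t - t\<^sup>2)) has_field_derivative
        chermite n (y - t) * ((2 * y - 2 * t) * exp (2 * y * t - t\<^sup>2))
          + 2 * of_nat n * chermite (n - 1) (y - t) * - 1 * exp (2 * y * t - t\<^sup>2)) (at t)"
      by (rule DERIV_mult')
    moreover have "chermite n (y - t) * ((2 * y - 2 * t) * exp (2 * y * t - t\<^sup>2))
          + 2 * of_nat n * chermite (n - 1) (y - t) * - 1 * exp (2 * y * t - t\<^sup>2)
        = chermite (Suc n) (y - t) * exp (2 * y * t - t\<^sup>2)"
      unfolding chermite_Suc[of n "y - t"] by (simp add: algebra_simps)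
    ultimately show ?thesis
      by simp
  qed
  then show ?case
    by (simp add: Suc.IH fun_eq_iff DERIV_imp_deriv)
qed

lemma chermite_generating_function:
  "(\<lambda>n. chermite n y / fact n * t ^ n) sums exp (2 * y * t - t\<^sup>2)"
proof -
  have "(\<lambda>t. exp (2 * y * t - t\<^sup>2)) holomorphic_on ball 0 (norm t + 1)"
    by (intro holomorphic_intros)
  from holomorphic_power_series[OF this, of t]
  show ?thesis
    by (simp add: higher_deriv_hermite_generating_function)
qed

section \<open>Square-integrable functions\<close>

lemma integrable_mult_L2R:
  assumes "f \<in> L2R" and "g \<in> L2R"
  shows "integrable lborel (\<lambda>x. f x * g x)"
proof -
  from assms have [measurable]: "f \<in> borel_measurable lborel" "g \<in> borel_measurable lborel"
    and squares: "integrable lborel (\<lambda>x. (cmod (f x))\<^sup>2 + (cmod (g x))\<^sup>2)"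
    by (auto simp: L2R_def)
  have "cmod (f x * g x) \<le> (cmod (f x))\<^sup>2 + (cmod (g x))\<^sup>2" for x
    using sum_squares_bound[of "cmod (f x)" "cmod (g x)"]
      mult_nonneg_nonneg[OF norm_ge_zero norm_ge_zero, of "f x" "g x"]
    unfolding norm_mult mult.assoc by linarith
  then show ?thesis
    by (intro Bochner_Integration.integrable_bound[OF squares]) auto
qed

lemma L2R_diff:
  assumes "f \<in> L2R" and "g \<in> L2R"
  shows "(\<lambda>x. f x - g x) \<in> L2R"
proof -
  from assms have [measurable]: "f \<in> borel_measurable lborel" "g \<in> borel_measurable lborel"
    and squares: "integrable lborel (\<lambda>x. 2 * (cmod (f x))\<^sup>2 + 2 * (cmod (g x))\<^sup>2)"
    by (auto simp: L2R_def)
  have "(cmod (f x - g x))\<^sup>2 \<le> 2 * (cmod (f x))\<^sup>2 + 2 * (cmod (g x))\<^sup>2" for x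
  proof -
    have "(cmod (f x - g x))\<^sup>2 \<le> (cmod (f x) + cmod (g x))\<^sup>2"
      by (intro power_mono norm_triangle_ineq4) simp
    also have "\<dots> \<le> 2 * (cmod (f x))\<^sup>2 + 2 * (cmod (g x))\<^sup>2"
      using sum_squares_bound[of "cmod (f x)" "cmod (g x)"] by (simp add: power2_sum)
    finally show ?thesis .
  qed
  then have "integrable lborel (\<lambda>x. (cmod (f x - g x))\<^sup>2)"
    by (intro Bochner_Integration.integrable_bound[OF squares]) auto
  then show ?thesis
    by (simp add: L2R_def)
qed

lemma L2R_mult_left:
  assumes "f \<in> L2R"
  shows "(\<lambda>x. c * f x) \<in> L2R"
  using assms integrable_mult_right[of "(cmod c)\<^sup>2"]
  by (auto simp: L2R_def norm_mult power_mult_distrib)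

lemma L2R_indicator_mult:
  assumes "f \<in> L2R" and [measurable]: "S \<in> sets lborel"
  shows "(\<lambda>x. indicator S x * f x) \<in> L2R"
proof -
  from assms have [measurable]: "f \<in> borel_measurable lborel"
    and square: "integrable lborel (\<lambda>x. (cmod (f x))\<^sup>2)"
    by (auto simp: L2R_def)
  have "integrable lborel (\<lambda>x. (cmod (indicator S x * f x))\<^sup>2)"
    by (rule Bochner_Integration.integrable_bound[OF square]) (auto simp: indicator_def)
  then show ?thesis
    by (simp add: L2R_def)
qed

lemma integrable_indicator_mult_L2R:
  assumes "f \<in> L2R"
  shows "integrable lborel (\<lambda>x. indicator {a..b} x * f x)"
proof -
  have "(\<lambda>x. (cmod (indicator {a..b} x :: complex))\<^sup>2) = indicator {a..b}"
    by (auto simp: fun_eq_iff indicator_def)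
  moreover have "integrable lborel (indicator {a..b} :: real \<Rightarrow> real)"
    by (rule integrable_real_indicator) (simp_all add: emeasure_lborel_Icc_eq)
  ultimately have "integrable lborel (\<lambda>x. (cmod (indicator {a..b} x :: complex))\<^sup>2)"
    by simp
  then have "(indicator {a..b} :: real \<Rightarrow> complex) \<in> L2R"
    by (simp add: L2R_def)
  from integrable_mult_L2R[OF this assms] show ?thesis .
qed

lemma gaussian_L2R:
  assumes "a > 0"
  shows "gaussian a b \<in> L2R"
proof -
  have "(cmod (gaussian a b x))\<^sup>2 = cmod (gaussian (2 * a) (2 * b) x)" for x
    by (simp add: power2_eq_square gaussian_mult flip: norm_mult)
  moreover have "integrable lborel (gaussian (2 * a) (2 * b))"
    using assms by (simp add: integrable_gaussian)
  ultimately show ?thesis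
    by (simp add: L2R_def integrable_norm)
qed

lemma norm_integral_mult_le_L2R:
  assumes "f \<in> L2R" and "g \<in> L2R" and "e > 0"
  shows "norm (LINT x|lborel. f x * g x) \<le>
    e / 2 * (LINT x|lborel. (cmod (f x))\<^sup>2) + 1 / (2 * e) * (LINT x|lborel. (cmod (g x))\<^sup>2)"
proof -
  have young: "a * b \<le> e / 2 * a\<^sup>2 + 1 / (2 * e) * b\<^sup>2" for a b :: real
  proof -
    have "2 * (e * a) * b \<le> (e * a)\<^sup>2 + b\<^sup>2"
      by (rule sum_squares_bound)
    with \<open>e > 0\<close> show ?thesis
      by (simp add: field_simps power2_eq_square)
  qed
  from assms have squares: "integrable lborel (\<lambda>x. (cmod (f x))\<^sup>2)" "integrable lborel (\<lambda>x. (cmod (g x))\<^sup>2)"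
    by (auto simp: L2R_def)
  have "norm (LINT x|lborel. f x * g x) \<le> (LINT x|lborel. cmod (f x * g x))"
    by (rule integral_norm_bound)
  also have "\<dots> \<le> (LINT x|lborel. e / 2 * (cmod (f x))\<^sup>2 + 1 / (2 * e) * (cmod (g x))\<^sup>2)"
  proof (rule integral_mono)
    show "integrable lborel (\<lambda>x. cmod (f x * g x))"
      using integrable_mult_L2R[OF assms(1,2)] by (rule integrable_norm)
    show "integrable lborel (\<lambda>x. e / 2 * (cmod (f x))\<^sup>2 + 1 / (2 * e) * (cmod (g x))\<^sup>2)"
      using squares by simp
    show "cmod (f x * g x) \<le> e / 2 * (cmod (f x))\<^sup>2 + 1 / (2 * e) * (cmod (g x))\<^sup>2" for x
      unfolding norm_mult by (rule young)
  qed
  also have "\<dots> = e / 2 * (LINT x|lborel. (cmod (f x))\<^sup>2) + 1 / (2 * e) * (LINT x|lborel. (cmod (g x))\<^sup>2)"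
    using squares by simp
  finally show ?thesis .
qed

lemma tendsto_integral_mult_L2R:
  assumes f: "f \<in> L2R" and g: "g \<in> L2R" and h: "\<And>R. h R \<in> L2R"
    and lim: "((\<lambda>R. LINT x|lborel. (cmod (g x - h R x))\<^sup>2) \<longlongrightarrow> 0) F"
  shows "((\<lambda>R. LINT x|lborel. f x * h R x) \<longlongrightarrow> (LINT x|lborel. f x * g x)) F"
proof (rule tendstoI)
  fix \<eta> :: real
  assume "\<eta> > 0"
  define W where "W = (LINT x|lborel. (cmod (f x))\<^sup>2)"
  have "W \<ge> 0"
    unfolding W_def by (intro integral_nonneg_AE) auto
  define e where "e = \<eta> / (2 * (W + 1))"
  have "e > 0"
    using \<open>\<eta> > 0\<close> \<open>W \<ge> 0\<close> by (simp add: e_def)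
  have "\<forall>\<^sub>F R in F. (LINT x|lborel. (cmod (g x - h R x))\<^sup>2) < \<eta> * e"
    using tendstoD[OF lim, of "\<eta> * e"] \<open>\<eta> > 0\<close> \<open>e > 0\<close> by simp
  then show "\<forall>\<^sub>F R in F. dist (LINT x|lborel. f x * h R x) (LINT x|lborel. f x * g x) < \<eta>"
  proof (rule eventually_mono)
    fix R
    assume close: "(LINT x|lborel. (cmod (g x - h R x))\<^sup>2) < \<eta> * e"
    have "dist (LINT x|lborel. f x * h R x) (LINT x|lborel. f x * g x) =
        norm (LINT x|lborel. f x * (h R x - g x))"
      using integrable_mult_L2R[OF f h] integrable_mult_L2R[OF f g]
      by (simp add: dist_norm algebra_simps)
    also have "\<dots> \<le> e / 2 * W + 1 / (2 * e) * (LINT x|lborel. (cmod (h R x - g x))\<^sup>2)"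
      unfolding W_def by (rule norm_integral_mult_le_L2R[OF f L2R_diff[OF h g] \<open>e > 0\<close>])
    also have "\<dots> < \<eta>"
    proof -
      have "e / 2 * W \<le> \<eta> / 4"
        using \<open>\<eta> > 0\<close> \<open>W \<ge> 0\<close> by (simp add: e_def field_simps)
      moreover have "1 / (2 * e) * (LINT x|lborel. (cmod (h R x - g x))\<^sup>2) < \<eta> / 2"
        using close \<open>e > 0\<close> by (simp add: norm_minus_commute field_simps)
      ultimately show ?thesis
        using \<open>\<eta> > 0\<close> by linarith
    qed
    finally show "dist (LINT x|lborel. f x * h R x) (LINT x|lborel. f x * g x) < \<eta>" .
  qed
qed

section \<open>Fourier integrals and a Plancherel inequality\<close>

text \<open>Unnormalised: \<^const>\<open>fourier_L2\<close> \<open>\<alpha>\<close> uses \<open>sqrt (\<alpha> / (2 * pi))\<close> times this integral.\<close>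

definition fourier_integral :: "real \<Rightarrow> (real \<Rightarrow> complex) \<Rightarrow> real \<Rightarrow> complex" where
  "fourier_integral \<alpha> g t = (LINT x|lborel. exp (- \<i> * of_real (\<alpha> * t * x)) * g x)"

lemma borel_measurable_fourier_integral:
  assumes "integrable lborel g"
  shows "fourier_integral \<alpha> g \<in> borel_measurable lborel"
proof -
  have [measurable]: "g \<in> borel_measurable lborel"
    using assms by (rule borel_measurable_integrable)
  show ?thesis
    unfolding fourier_integral_def by measurable
qed

lemma norm_fourier_integral_le:
  "norm (fourier_integral \<alpha> g t) \<le> (LINT x|lborel. norm (g x))"
proof -
  have "norm (fourier_integral \<alpha> g t) \<le> (LINT x|lborel. norm (exp (- \<i> * of_real (\<alpha> * t * x)) * g x))"
    unfolding fourier_integral_def by (rule integral_norm_bound)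
  also have "\<dots> = (LINT x|lborel. norm (g x))"
    by (simp add: norm_mult)
  finally show ?thesis .
qed

lemma fourier_integral_mult_left:
  "fourier_integral \<alpha> (\<lambda>x. c * g x) t = c * fourier_integral \<alpha> g t"
  by (simp add: fourier_integral_def mult.left_commute)

lemma fourier_integral_gaussian:
  assumes "a > 0"
  shows "fourier_integral \<alpha> (gaussian a b) t =
    of_real (sqrt (2 * pi / a)) * exp ((b - \<i> * of_real (\<alpha> * t))\<^sup>2 / (2 * of_real a))"
proof -
  have "exp (- \<i> * of_real (\<alpha> * t * x)) * gaussian a b x = gaussian a (b - \<i> * of_real (\<alpha> * t)) x" for x
    using gaussian_mult_exp[of a b x "- \<i> * of_real (\<alpha> * t)"] by (simp add: ac_simps)
  then show ?thesis
    unfolding fourier_integral_def using integral_gaussian[OF assms] by simp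
qed

lemma fourier_integral_multiplication_formula:
  assumes u: "integrable lborel u" and g: "integrable lborel g"
  shows "(LINT t|lborel. u t * fourier_integral \<alpha> g t) = (LINT x|lborel. fourier_integral \<alpha> u x * g x)"
proof -
  have [measurable]: "u \<in> borel_measurable lborel" "g \<in> borel_measurable lborel"
    using u g by (auto intro: borel_measurable_integrable)
  define F where "F t x = u t * (exp (- \<i> * of_real (\<alpha> * t * x)) * g x)" for t x
  have norm_F: "norm (F t x) = norm (u t) * norm (g x)" for t x
    unfolding F_def by (simp add: norm_mult)
  have "integrable (lborel \<Otimes>\<^sub>M lborel) (\<lambda>(t, x). F t x)"
  proof (rule lborel_pair.Fubini_integrable)
    show "(\<lambda>(t, x). F t x) \<in> borel_measurable (lborel \<Otimes>\<^sub>M lborel)"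
      unfolding F_def by measurable
    show "integrable lborel (\<lambda>t. LINT x|lborel. norm (case_prod F (t, x)))"
      unfolding case_prod_conv norm_F using integrable_norm[OF u] by simp
    have "integrable lborel (\<lambda>x. exp (- \<i> * of_real (\<alpha> * t * x)) * g x)" for t
      by (rule Bochner_Integration.integrable_bound[OF integrable_norm[OF g]]) (auto simp: norm_mult)
    then show "AE t in lborel. integrable lborel (\<lambda>x. case_prod F (t, x))"
      unfolding F_def by auto
  qed
  have "(LINT t|lborel. u t * fourier_integral \<alpha> g t) = (LINT t|lborel. LINT x|lborel. F t x)"
    unfolding F_def fourier_integral_def by simp
  also have "\<dots> = (LINT x|lborel. LINT t|lborel. F t x)"
    using lborel_pair.Fubini_integral[OF \<open>integrable _ (\<lambda>(t, x). F t x)\<close>] by simp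
  also have "\<dots> = (LINT x|lborel. fourier_integral \<alpha> u x * g x)"
  proof (rule Bochner_Integration.integral_cong[OF refl])
    fix x
    have "(LINT t|lborel. F t x) = (LINT t|lborel. exp (- \<i> * of_real (\<alpha> * x * t)) * u t * g x)"
      by (rule Bochner_Integration.integral_cong) (simp_all add: F_def mult_ac)
    also have "\<dots> = fourier_integral \<alpha> u x * g x"
      unfolding fourier_integral_def by (rule integral_mult_left_zero)
    finally show "(LINT t|lborel. F t x) = fourier_integral \<alpha> u x * g x" .
  qed
  finally show ?thesis .
qed

lemma
  fixes f :: "real \<Rightarrow> 'a::{banach, second_countable_topology}"
  shows integrable_lborel_translate_iff: "integrable lborel (\<lambda>y. f (y - x)) \<longleftrightarrow> integrable lborel f"
    and integral_lborel_translate: "(LINT y|lborel. f (y - x)) = (LINT y|lborel. f y)"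
    and integrable_lborel_reflect_iff: "integrable lborel (\<lambda>x. f (y - x)) \<longleftrightarrow> integrable lborel f"
    and integral_lborel_reflect: "(LINT x|lborel. f (y - x)) = (LINT x|lborel. f x)"
  using lborel_integrable_real_affine_iff[of 1 f "- x"] lborel_integral_real_affine[of 1 f "- x"]
    lborel_integrable_real_affine_iff[of "- 1" f y] lborel_integral_real_affine[of "- 1" f y]
  by simp_all

lemma integral_convolution:
  fixes H K :: "real \<Rightarrow> real"
  assumes H: "integrable lborel H" and K: "integrable lborel K"
  shows "integrable lborel (\<lambda>x. LINT y|lborel. H y * K (y - x))"
    and "(LINT x|lborel. LINT y|lborel. H y * K (y - x)) = (LINT y|lborel. H y) * (LINT y|lborel. K y)"
proof -
  have [measurable]: "H \<in> borel_measurable lborel" "K \<in> borel_measurable lborel"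
    using H K by (auto intro: borel_measurable_integrable)
  have "integrable (lborel \<Otimes>\<^sub>M lborel) (\<lambda>(y, x). H y * K (y - x))"
  proof (rule lborel_pair.Fubini_integrable)
    show "(\<lambda>(y, x). H y * K (y - x)) \<in> borel_measurable (lborel \<Otimes>\<^sub>M lborel)"
      by measurable
    have "(LINT x|lborel. norm (H y * K (y - x))) = norm (H y) * (LINT x|lborel. norm (K x))" for y
      using integral_lborel_reflect[of "\<lambda>x. norm (K x)" y] by (simp add: abs_mult)
    then show "integrable lborel (\<lambda>y. LINT x|lborel. norm (case_prod (\<lambda>y x. H y * K (y - x)) (y, x)))"
      using integrable_norm[OF H] by simp
    show "AE y in lborel. integrable lborel (\<lambda>x. case_prod (\<lambda>y x. H y * K (y - x)) (y, x))"
      using K by (simp add: integrable_lborel_reflect_iff)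
  qed
  then show "integrable lborel (\<lambda>x. LINT y|lborel. H y * K (y - x))"
    and "(LINT x|lborel. LINT y|lborel. H y * K (y - x)) = (LINT y|lborel. H y) * (LINT y|lborel. K y)"
    using lborel_pair.integrable_snd[of "\<lambda>y x. H y * K (y - x)"]
      lborel_pair.Fubini_integral[of "\<lambda>y x. H y * K (y - x)"]
    by (simp_all add: integral_lborel_reflect mult.commute[of "integral\<^sup>L lborel H"])
qed

lemma integrable_mult_translate_bounded:
  fixes H K :: "real \<Rightarrow> real"
  assumes H: "integrable lborel H" and [measurable]: "K \<in> borel_measurable lborel"
    and K: "\<And>s. \<bar>K s\<bar> \<le> B"
  shows "integrable lborel (\<lambda>y. H y * K (y - x))"
proof (rule Bochner_Integration.integrable_bound[OF integrable_mult_right[where c = B, OF H]])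
  have [measurable]: "H \<in> borel_measurable lborel"
    using H by (rule borel_measurable_integrable)
  show "(\<lambda>y. H y * K (y - x)) \<in> borel_measurable lborel"
    by measurable
  have "B \<ge> 0"
    using K abs_ge_zero order_trans by blast
  moreover have "\<bar>H y\<bar> * \<bar>K (y - x)\<bar> \<le> B * \<bar>H y\<bar>" for y
    using mult_left_mono[OF K[of "y - x"] abs_ge_zero[of "H y"]] by (simp add: mult.commute)
  ultimately show "AE y in lborel. norm (H y * K (y - x)) \<le> norm (B * H y)"
    by (intro AE_I2) (simp add: abs_mult)
qed

lemma mult_integral_translate_le:
  fixes G K :: "real \<Rightarrow> real"
  assumes K: "\<And>s. 0 \<le> K s" "integrable lborel K"
    and GK: "integrable lborel (\<lambda>y. G y * K (y - x))" "integrable lborel (\<lambda>y. (G y)\<^sup>2 * K (y - x))"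
  shows "G x * (LINT y|lborel. G y * K (y - x)) \<le>
    (LINT y|lborel. K y) / 2 * (G x)\<^sup>2 + (LINT y|lborel. (G y)\<^sup>2 * K (y - x)) / 2"
proof -
  have K_translate: "integrable lborel (\<lambda>y. K (y - x))"
    using K(2) by (simp add: integrable_lborel_translate_iff)
  have "G x * (LINT y|lborel. G y * K (y - x)) = (LINT y|lborel. G x * (G y * K (y - x)))"
    by simp
  also have "\<dots> \<le> (LINT y|lborel. (G x)\<^sup>2 / 2 * K (y - x) + (G y)\<^sup>2 * K (y - x) / 2)"
  proof (rule integral_mono)
    show "integrable lborel (\<lambda>y. G x * (G y * K (y - x)))"
      using GK(1) by (rule integrable_mult_right)
    show "integrable lborel (\<lambda>y. (G x)\<^sup>2 / 2 * K (y - x) + (G y)\<^sup>2 * K (y - x) / 2)"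
      using K_translate GK(2) by (intro Bochner_Integration.integrable_add integrable_mult_right integrable_divide)
    show "G x * (G y * K (y - x)) \<le> (G x)\<^sup>2 / 2 * K (y - x) + (G y)\<^sup>2 * K (y - x) / 2" for y
      using mult_right_mono[OF sum_squares_bound[of "G x" "G y"] K(1)[of "y - x"]]
      by (simp add: algebra_simps)
  qed
  also have "\<dots> = (LINT y|lborel. K y) / 2 * (G x)\<^sup>2 + (LINT y|lborel. (G y)\<^sup>2 * K (y - x)) / 2"
    using K_translate GK(2) by (simp add: integral_lborel_translate)
  finally show ?thesis .
qed

text \<open>A Schur test, from \<open>2 G(x) G(y) \<le> G(x)^2 + G(y)^2\<close>.\<close>

lemma integral_mult_convolution_le:
  fixes G K :: "real \<Rightarrow> real"
  assumes [measurable]: "G \<in> borel_measurable lborel"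
    and G: "\<And>x. 0 \<le> G x" "integrable lborel G" "integrable lborel (\<lambda>x. (G x)\<^sup>2)"
    and K: "\<And>s. 0 \<le> K s" "\<And>s. K s \<le> B" "integrable lborel K"
  shows "integrable lborel (\<lambda>x. G x * (LINT y|lborel. G y * K (y - x)))"
    and "(LINT x|lborel. G x * (LINT y|lborel. G y * K (y - x))) \<le>
      (LINT x|lborel. K x) * (LINT x|lborel. (G x)\<^sup>2)"
proof -
  have K_measurable [measurable]: "K \<in> borel_measurable lborel"
    using K(3) by (rule borel_measurable_integrable)
  have "\<bar>K s\<bar> \<le> B" for s
    using K(1,2) by simp
  note translates = integrable_mult_translate_bounded[OF G(2) K_measurable this]
    integrable_mult_translate_bounded[OF G(3) K_measurable this]
  define P where "P x = (LINT y|lborel. G y * K (y - x))" for x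
  define Q where "Q x = (LINT y|lborel. (G y)\<^sup>2 * K (y - x))" for x
  have [measurable]: "P \<in> borel_measurable lborel"
    unfolding P_def by measurable
  have Q: "integrable lborel Q" "(LINT x|lborel. Q x) = (LINT x|lborel. (G x)\<^sup>2) * (LINT x|lborel. K x)"
    unfolding Q_def using integral_convolution[OF G(3) K(3)] by auto
  have bound: "G x * P x \<le> (LINT y|lborel. K y) / 2 * (G x)\<^sup>2 + Q x / 2" for x
    unfolding P_def Q_def using K(1,3) translates by (rule mult_integral_translate_le)
  have dominating: "integrable lborel (\<lambda>x. (LINT y|lborel. K y) / 2 * (G x)\<^sup>2 + Q x / 2)"
    using G(3) Q(1) by (intro Bochner_Integration.integrable_add integrable_mult_right integrable_divide)
  have "P x \<ge> 0" for x
    unfolding P_def using G(1) K(1) by (intro integral_nonneg_AE) auto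
  then have "integrable lborel (\<lambda>x. G x * P x)"
    using G(1) bound
    by (intro Bochner_Integration.integrable_bound[OF dominating])
      (auto intro!: AE_I2 intro: order_trans[OF _ abs_ge_self])
  then show "integrable lborel (\<lambda>x. G x * (LINT y|lborel. G y * K (y - x)))"
    by (simp add: P_def)
  have "(LINT x|lborel. G x * P x) \<le> (LINT x|lborel. (LINT y|lborel. K y) / 2 * (G x)\<^sup>2 + Q x / 2)"
    using \<open>integrable lborel (\<lambda>x. G x * P x)\<close> dominating bound by (rule integral_mono)
  also have "\<dots> = (LINT x|lborel. K x) * (LINT x|lborel. (G x)\<^sup>2)"
    using G(3) Q by simp
  finally show "(LINT x|lborel. G x * (LINT y|lborel. G y * K (y - x))) \<le>
      (LINT x|lborel. K x) * (LINT x|lborel. (G x)\<^sup>2)"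
    by (simp add: P_def)
qed

lemma borel_measurable_cnj [measurable (raw)]:
  "f \<in> borel_measurable M \<Longrightarrow> (\<lambda>x. cnj (f x)) \<in> borel_measurable M"
  by (rule borel_measurable_continuous_on[where f = cnj]) (auto intro: continuous_intros)

definition damping_kernel :: "real \<Rightarrow> real \<Rightarrow> real \<Rightarrow> real" where
  "damping_kernel \<alpha> \<epsilon> s = sqrt (pi / \<epsilon>) * exp (- (\<alpha>\<^sup>2 / (2 * \<epsilon>) * s\<^sup>2) / 2)"

lemma borel_measurable_damping_kernel [measurable]: "damping_kernel \<alpha> \<epsilon> \<in> borel_measurable borel"
  unfolding damping_kernel_def[abs_def] by measurable

lemma damping_kernel_nonneg: "\<epsilon> > 0 \<Longrightarrow> 0 \<le> damping_kernel \<alpha> \<epsilon> s"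
  by (simp add: damping_kernel_def)

lemma damping_kernel_le: "\<epsilon> > 0 \<Longrightarrow> damping_kernel \<alpha> \<epsilon> s \<le> sqrt (pi / \<epsilon>)"
  by (simp add: damping_kernel_def mult_left_le)

lemma has_bochner_integral_damping_kernel:
  assumes "\<alpha> \<noteq> 0" and "\<epsilon> > 0"
  shows "has_bochner_integral lborel (damping_kernel \<alpha> \<epsilon>) (2 * pi / \<bar>\<alpha>\<bar>)"
proof -
  have "\<alpha>\<^sup>2 / (2 * \<epsilon>) > 0"
    using assms by simp
  from has_bochner_integral_mult_right[OF has_bochner_integral_real_gaussian[OF this], of "sqrt (pi / \<epsilon>)"]
  have "has_bochner_integral lborel (damping_kernel \<alpha> \<epsilon>) (sqrt (pi / \<epsilon>) * sqrt (2 * pi / (\<alpha>\<^sup>2 / (2 * \<epsilon>))))"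
    by (simp add: damping_kernel_def[abs_def])
  moreover have "sqrt (pi / \<epsilon>) * sqrt (2 * pi / (\<alpha>\<^sup>2 / (2 * \<epsilon>))) = sqrt ((2 * pi / \<bar>\<alpha>\<bar>)\<^sup>2)"
    using assms by (simp add: field_simps power2_eq_square flip: real_sqrt_mult)
  ultimately show ?thesis
    by simp
qed

lemma damped_exp_eq_gaussian:
  "of_real (exp (- \<epsilon> * t\<^sup>2)) * exp (\<i> * of_real (\<beta> * t)) = gaussian (2 * \<epsilon>) (\<i> * of_real \<beta>) t"
  by (simp add: gaussian_def mult_ac flip: exp_of_real exp_add)

lemma fourier_integral_damped_exp:
  assumes "\<epsilon> > 0"
  shows "fourier_integral \<alpha> (\<lambda>t. of_real (exp (- \<epsilon> * t\<^sup>2)) * exp (\<i> * of_real (\<alpha> * x * t))) y =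
    of_real (damping_kernel \<alpha> \<epsilon> (y - x))"
proof -
  have "2 * \<epsilon> > 0"
    using assms by simp
  moreover have "(\<i> * of_real (\<alpha> * x) - \<i> * of_real (\<alpha> * y))\<^sup>2 / (2 * of_real (2 * \<epsilon>)) =
      of_real (- (\<alpha>\<^sup>2 / (2 * \<epsilon>) * (y - x)\<^sup>2) / 2)"
    using assms by (simp add: field_simps power2_eq_square)
  ultimately show ?thesis
    unfolding damped_exp_eq_gaussian by (simp add: fourier_integral_gaussian damping_kernel_def
        flip: exp_of_real)
qed

lemma fourier_integral_damped_conj:
  assumes g: "integrable lborel g" and "\<epsilon> > 0"
  shows "fourier_integral \<alpha> (\<lambda>t. of_real (exp (- \<epsilon> * t\<^sup>2)) * cnj (fourier_integral \<alpha> g t)) x =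
    cnj (LINT y|lborel. of_real (damping_kernel \<alpha> \<epsilon> (y - x)) * g y)"
proof -
  define v where "v t = of_real (exp (- \<epsilon> * t\<^sup>2)) * exp (\<i> * of_real (\<alpha> * x * t))" for t
  have "integrable lborel v"
    unfolding v_def damped_exp_eq_gaussian using \<open>\<epsilon> > 0\<close> by (simp add: integrable_gaussian)
  define h where "h = fourier_integral \<alpha> g"
  have "fourier_integral \<alpha> (\<lambda>t. of_real (exp (- \<epsilon> * t\<^sup>2)) * cnj (h t)) x =
      (LINT t|lborel. cnj (v t * h t))"
    unfolding fourier_integral_def v_def
    by (rule Bochner_Integration.integral_cong) (simp_all add: exp_cnj mult_ac)
  then have "fourier_integral \<alpha> (\<lambda>t. of_real (exp (- \<epsilon> * t\<^sup>2)) * cnj (fourier_integral \<alpha> g t)) x =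
      (LINT t|lborel. cnj (v t * fourier_integral \<alpha> g t))"
    by (simp add: h_def)
  also have "\<dots> = cnj (LINT t|lborel. v t * fourier_integral \<alpha> g t)"
    by (rule Bochner_Integration.integral_cnj)
  also have "\<dots> = cnj (LINT y|lborel. fourier_integral \<alpha> v y * g y)"
    unfolding fourier_integral_multiplication_formula[OF \<open>integrable lborel v\<close> g] ..
  also have "\<dots> = cnj (LINT y|lborel. of_real (damping_kernel \<alpha> \<epsilon> (y - x)) * g y)"
    unfolding v_def fourier_integral_damped_exp[OF \<open>\<epsilon> > 0\<close>] ..
  finally show ?thesis .
qed

lemma integrable_damped_bounded:
  fixes h :: "real \<Rightarrow> 'a::{banach, second_countable_topology}"
  assumes "\<epsilon> > 0" and [measurable]: "h \<in> borel_measurable lborel" and h: "\<And>t. norm (h t) \<le> N"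
  shows "integrable lborel (\<lambda>t. exp (- \<epsilon> * t\<^sup>2) *\<^sub>R h t)"
proof (rule Bochner_Integration.integrable_bound
    [OF integrable_mult_right[where c = N, OF integrable_exp_neg_mult_square[OF \<open>\<epsilon> > 0\<close>]]])
  have "N \<ge> 0"
    using h[of 0] norm_ge_zero[of "h 0"] by linarith
  have "exp (- \<epsilon> * t\<^sup>2) * norm (h t) \<le> N * exp (- \<epsilon> * t\<^sup>2)" for t
    using mult_left_mono[OF h[of t], of "exp (- \<epsilon> * t\<^sup>2)"] by (simp add: mult.commute)
  with \<open>N \<ge> 0\<close> show "AE t in lborel. norm (exp (- \<epsilon> * t\<^sup>2) *\<^sub>R h t) \<le> norm (N * exp (- \<epsilon> * t\<^sup>2))"
    by (intro AE_I2) simp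
qed measurable

text \<open>The Gaussian damping makes the double integral absolutely convergent, so that Fubini
  turns the damped \<open>L^2\<close>-norm of the transform into a pairing of \<open>g\<close> with a convolution.\<close>

lemma damped_fourier_square_eq:
  assumes g: "integrable lborel g" and "\<epsilon> > 0"
  shows "integrable lborel (\<lambda>t. exp (- \<epsilon> * t\<^sup>2) * (cmod (fourier_integral \<alpha> g t))\<^sup>2)"
    and "of_real (LINT t|lborel. exp (- \<epsilon> * t\<^sup>2) * (cmod (fourier_integral \<alpha> g t))\<^sup>2) =
      (LINT x|lborel. cnj (LINT y|lborel. of_real (damping_kernel \<alpha> \<epsilon> (y - x)) * g y) * g x)"
proof -
  define h where "h = fourier_integral \<alpha> g"
  have [measurable]: "h \<in> borel_measurable lborel"
    unfolding h_def using g by (rule borel_measurable_fourier_integral)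
  have h_le: "norm (h t) \<le> (LINT x|lborel. norm (g x))" for t
    unfolding h_def by (rule norm_fourier_integral_le)
  then have "norm ((cmod (h t))\<^sup>2) \<le> (LINT x|lborel. norm (g x))\<^sup>2" for t
    by (simp add: power_mono)
  moreover have "(\<lambda>t. (cmod (h t))\<^sup>2) \<in> borel_measurable lborel"
    by measurable
  ultimately have "integrable lborel (\<lambda>t. exp (- \<epsilon> * t\<^sup>2) *\<^sub>R (cmod (h t))\<^sup>2)"
    using integrable_damped_bounded[OF \<open>\<epsilon> > 0\<close>] by blast
  then show "integrable lborel (\<lambda>t. exp (- \<epsilon> * t\<^sup>2) * (cmod (fourier_integral \<alpha> g t))\<^sup>2)"
    by (simp add: h_def)
  define u where "u t = of_real (exp (- \<epsilon> * t\<^sup>2)) * cnj (h t)" for t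
  have "norm (cnj (h t)) \<le> (LINT x|lborel. norm (g x))" for t
    using h_le by simp
  moreover have "(\<lambda>t. cnj (h t)) \<in> borel_measurable lborel"
    by measurable
  ultimately have "integrable lborel (\<lambda>t. exp (- \<epsilon> * t\<^sup>2) *\<^sub>R cnj (h t))"
    using integrable_damped_bounded[OF \<open>\<epsilon> > 0\<close>] by blast
  then have "integrable lborel u"
    by (simp add: u_def[abs_def] scaleR_conv_of_real)
  have "of_real (LINT t|lborel. exp (- \<epsilon> * t\<^sup>2) * (cmod (h t))\<^sup>2) = (LINT t|lborel. u t * h t)"
    unfolding integral_complex_of_real[symmetric] u_def
    by (rule Bochner_Integration.integral_cong)
      (simp_all add: complex_norm_square mult_ac flip: of_real_power)
  also have "\<dots> = (LINT x|lborel. fourier_integral \<alpha> u x * g x)"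
    unfolding h_def by (rule fourier_integral_multiplication_formula[OF \<open>integrable lborel u\<close> g])
  also have "\<dots> = (LINT x|lborel. cnj (LINT y|lborel. of_real (damping_kernel \<alpha> \<epsilon> (y - x)) * g y) * g x)"
    unfolding u_def h_def fourier_integral_damped_conj[OF g \<open>\<epsilon> > 0\<close>] ..
  finally show "of_real (LINT t|lborel. exp (- \<epsilon> * t\<^sup>2) * (cmod (fourier_integral \<alpha> g t))\<^sup>2) =
      (LINT x|lborel. cnj (LINT y|lborel. of_real (damping_kernel \<alpha> \<epsilon> (y - x)) * g y) * g x)"
    by (simp only: h_def)
qed

lemma norm_integral_mult_convolution_le:
  fixes K :: "real \<Rightarrow> real"
  assumes g: "integrable lborel g" "g \<in> L2R"
    and K: "\<And>s. 0 \<le> K s" "\<And>s. K s \<le> B" "integrable lborel K"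
  shows "norm (LINT x|lborel. cnj (LINT y|lborel. of_real (K (y - x)) * g y) * g x) \<le>
    (LINT s|lborel. K s) * (LINT x|lborel. (cmod (g x))\<^sup>2)"
proof -
  have [measurable]: "g \<in> borel_measurable lborel" "K \<in> borel_measurable lborel"
    using g(1) K(3) by (auto intro: borel_measurable_integrable)
  define C where "C x = (LINT y|lborel. of_real (K (y - x)) * g y)" for x
  define P where "P x = (LINT y|lborel. norm (g y) * K (y - x))" for x
  have [measurable]: "C \<in> borel_measurable lborel"
    unfolding C_def by measurable
  have C_le: "norm (C x) \<le> P x" for x
  proof -
    have "norm (C x) \<le> (LINT y|lborel. norm (of_real (K (y - x)) * g y))"
      unfolding C_def by (rule integral_norm_bound)
    then show ?thesis
      using K(1) by (simp add: P_def norm_mult mult.commute)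
  qed
  have squares: "integrable lborel (\<lambda>x. (norm (g x))\<^sup>2)"
    using g(2) by (simp add: L2R_def)
  note convolution = integral_mult_convolution_le[of "\<lambda>x. norm (g x)", OF _ _ integrable_norm[OF g(1)] squares K]
  have "norm (LINT x|lborel. cnj (C x) * g x) \<le> (LINT x|lborel. norm (cnj (C x) * g x))"
    by (rule integral_norm_bound)
  also have "\<dots> \<le> (LINT x|lborel. norm (g x) * P x)"
  proof (rule integral_mono)
    show "integrable lborel (\<lambda>x. norm (g x) * P x)"
      using convolution(1) by (simp add: P_def)
    show "norm (cnj (C x) * g x) \<le> norm (g x) * P x" for x
      using mult_right_mono[OF C_le norm_ge_zero, of x "g x"] by (simp add: norm_mult mult.commute)
    then show "integrable lborel (\<lambda>x. norm (cnj (C x) * g x))"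
      by (intro Bochner_Integration.integrable_bound[OF \<open>integrable lborel (\<lambda>x. norm (g x) * P x)\<close>])
        (auto intro!: AE_I2 intro: order_trans[OF _ abs_ge_self])
  qed
  also have "\<dots> \<le> (LINT s|lborel. K s) * (LINT x|lborel. (cmod (g x))\<^sup>2)"
    using convolution(2) by (simp add: P_def)
  finally show ?thesis
    by (simp add: C_def)
qed

lemma damped_fourier_square_le:
  assumes g: "integrable lborel g" "g \<in> L2R" and "\<alpha> \<noteq> 0" and "\<epsilon> > 0"
  shows "(LINT t|lborel. exp (- \<epsilon> * t\<^sup>2) * (cmod (fourier_integral \<alpha> g t))\<^sup>2) \<le>
    2 * pi / \<bar>\<alpha>\<bar> * (LINT x|lborel. (cmod (g x))\<^sup>2)"
proof -
  have kernel: "integrable lborel (damping_kernel \<alpha> \<epsilon>)"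
    "(LINT s|lborel. damping_kernel \<alpha> \<epsilon> s) = 2 * pi / \<bar>\<alpha>\<bar>"
    using has_bochner_integral_damping_kernel[OF \<open>\<alpha> \<noteq> 0\<close> \<open>\<epsilon> > 0\<close>]
    by (auto simp: has_bochner_integral_iff)
  have "(LINT t|lborel. exp (- \<epsilon> * t\<^sup>2) * (cmod (fourier_integral \<alpha> g t))\<^sup>2) =
      norm (of_real (LINT t|lborel. exp (- \<epsilon> * t\<^sup>2) * (cmod (fourier_integral \<alpha> g t))\<^sup>2) :: complex)"
    by (simp add: integral_nonneg_AE)
  also have "\<dots> = norm (LINT x|lborel. cnj (LINT y|lborel. of_real (damping_kernel \<alpha> \<epsilon> (y - x)) * g y) * g x)"
    unfolding damped_fourier_square_eq(2)[OF g(1) \<open>\<epsilon> > 0\<close>] ..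
  also have "\<dots> \<le> 2 * pi / \<bar>\<alpha>\<bar> * (LINT x|lborel. (cmod (g x))\<^sup>2)"
    using norm_integral_mult_convolution_le[OF g damping_kernel_nonneg damping_kernel_le kernel(1)]
      \<open>\<epsilon> > 0\<close> by (simp add: kernel(2))
  finally show ?thesis .
qed

text \<open>The Bochner integral in \<^const>\<open>fourier_L2\<close> is \<open>0\<close> for non-integrable integrands, so its
  convergence hypothesis only has content once the truncated transforms are known to be
  square integrable.\<close>

lemma fourier_integral_L2R:
  assumes g: "integrable lborel g" "g \<in> L2R" and "\<alpha> \<noteq> 0"
  shows "fourier_integral \<alpha> g \<in> L2R"
proof -
  define h where "h = fourier_integral \<alpha> g"
  have [measurable]: "h \<in> borel_measurable lborel"
    unfolding h_def using g(1) by (rule borel_measurable_fourier_integral)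
  define f where "f n t = exp (- (1 / real (Suc n)) * t\<^sup>2) * (cmod (h t))\<^sup>2" for n t
  have f_integrable: "integrable lborel (f n)" for n
    unfolding f_def h_def by (rule damped_fourier_square_eq(1)[OF g(1)]) simp
  have f_mono: "f n t \<le> f m t" if "n \<le> m" for n m t
  proof -
    have "1 / real (Suc m) \<le> 1 / real (Suc n)"
      using that by (simp add: frac_le)
    then have "- (1 / real (Suc n)) * t\<^sup>2 \<le> - (1 / real (Suc m)) * t\<^sup>2"
      by (intro mult_right_mono) auto
    then show ?thesis
      unfolding f_def by (intro mult_right_mono) auto
  qed
  have "integrable lborel (\<lambda>t. (cmod (h t))\<^sup>2)"
  proof (rule integrable_monotone_convergence[where f = f])
    show "AE t in lborel. mono (\<lambda>n. f n t)"
      by (auto simp: mono_def f_mono)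
    have "(\<lambda>n. 1 / real (Suc n)) \<longlonglongrightarrow> 0"
      by (rule LIMSEQ_Suc[OF lim_1_over_n])
    then have "(\<lambda>n. f n t) \<longlonglongrightarrow> exp (- 0 * t\<^sup>2) * (cmod (h t))\<^sup>2" for t
      unfolding f_def by (intro tendsto_intros)
    then show "AE t in lborel. (\<lambda>n. f n t) \<longlonglongrightarrow> (cmod (h t))\<^sup>2"
      by simp
    have "incseq (\<lambda>n. integral\<^sup>L lborel (f n))"
      by (intro monoI integral_mono f_integrable f_mono)
    moreover have "integral\<^sup>L lborel (f n) \<le> 2 * pi / \<bar>\<alpha>\<bar> * (LINT x|lborel. (cmod (g x))\<^sup>2)" for n
      unfolding f_def h_def by (rule damped_fourier_square_le[OF g \<open>\<alpha> \<noteq> 0\<close>]) simp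
    ultimately show "(\<lambda>n. integral\<^sup>L lborel (f n)) \<longlonglongrightarrow> (SUP n. integral\<^sup>L lborel (f n))"
      by (intro LIMSEQ_incseq_SUP bdd_aboveI) auto
  qed (use f_integrable in auto)
  with \<open>h \<in> borel_measurable lborel\<close> show ?thesis
    unfolding L2R_def h_def by simp
qed

section \<open>The weak form of the \<open>L^2\<close> Fourier transform\<close>

lemma tendsto_integral_indicator_Icc:
  fixes h :: "real \<Rightarrow> complex"
  assumes "integrable lborel h"
  shows "((\<lambda>R. LINT x|lborel. indicator {-R..R} x * h x) \<longlongrightarrow> (LINT x|lborel. h x)) at_top"
proof (rule integral_dominated_convergence_at_top[where w = "\<lambda>x. norm (h x)"])
  show [measurable]: "h \<in> borel_measurable lborel"
    using assms by (rule borel_measurable_integrable)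
  show "(\<lambda>x. indicator {-R..R} x * h x) \<in> borel_measurable lborel" for R
    by measurable
  show "integrable lborel (\<lambda>x. norm (h x))"
    using assms by (rule integrable_norm)
  show "AE x in lborel. ((\<lambda>R. indicator {-R..R} x * h x) \<longlongrightarrow> h x) at_top"
  proof (intro AE_I2 tendsto_eventually)
    fix x :: real
    show "\<forall>\<^sub>F R in at_top. indicator {-R..R} x * h x = h x"
      using eventually_ge_at_top[of "\<bar>x\<bar>"] by eventually_elim (auto simp: indicator_def)
  qed
  show "\<forall>\<^sub>F R in at_top. AE x in lborel. norm (indicator {-R..R} x * h x) \<le> norm (h x)"
    by (intro always_eventually allI AE_I2) (auto simp: indicator_def)
qed

lemma integral_mult_fourier_L2:
  assumes "\<alpha> > 0" and F: "fourier_L2 \<alpha> \<phi> \<psi>" and \<phi>: "\<phi> \<in> L2R"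
    and w: "integrable lborel w" "w \<in> L2R"
  shows "(LINT t|lborel. w t * \<psi> t) =
    (LINT x|lborel. of_real (sqrt (\<alpha> / (2 * pi))) * fourier_integral \<alpha> w x * \<phi> x)"
proof -
  define c :: complex where "c = of_real (sqrt (\<alpha> / (2 * pi)))"
  define \<phi>R where "\<phi>R R x = indicator {-R..R} x * \<phi> x" for R x
  define \<psi>R where "\<psi>R R t = c * fourier_integral \<alpha> (\<phi>R R) t" for R t
  have \<phi>R: "integrable lborel (\<phi>R R)" "\<phi>R R \<in> L2R" for R
    unfolding \<phi>R_def[abs_def] using \<phi> by (auto intro: integrable_indicator_mult_L2R L2R_indicator_mult)
  have "\<psi>R R \<in> L2R" for R
    unfolding \<psi>R_def using fourier_integral_L2R[OF \<phi>R] \<open>\<alpha> > 0\<close> by (auto intro: L2R_mult_left)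
  moreover have "\<psi> \<in> L2R"
    and "((\<lambda>R. LINT t|lborel. (cmod (\<psi> t - \<psi>R R t))\<^sup>2) \<longlongrightarrow> 0) at_top"
    using F unfolding fourier_L2_def \<psi>R_def \<phi>R_def fourier_integral_def c_def by (simp_all add: mult_ac)
  ultimately have "((\<lambda>R. LINT t|lborel. w t * \<psi>R R t) \<longlongrightarrow> (LINT t|lborel. w t * \<psi> t)) at_top"
    by (intro tendsto_integral_mult_L2R[OF w(2)])
  moreover have "(LINT t|lborel. w t * \<psi>R R t) =
      (LINT x|lborel. indicator {-R..R} x * (c * fourier_integral \<alpha> w x * \<phi> x))" for R
    using fourier_integral_multiplication_formula[OF w(1) \<phi>R(1)]
    by (simp add: \<psi>R_def \<phi>R_def mult_ac)
  moreover have "integrable lborel (\<lambda>x. c * fourier_integral \<alpha> w x * \<phi> x)"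
    using \<open>\<alpha> > 0\<close> by (intro integrable_mult_L2R[OF L2R_mult_left[OF fourier_integral_L2R[OF w]] \<phi>]) simp
  then have "((\<lambda>R. LINT x|lborel. indicator {-R..R} x * (c * fourier_integral \<alpha> w x * \<phi> x)) \<longlongrightarrow>
      (LINT x|lborel. c * fourier_integral \<alpha> w x * \<phi> x)) at_top"
    by (rule tendsto_integral_indicator_Icc)
  ultimately show ?thesis
    unfolding c_def[symmetric] by (auto intro: tendsto_unique[OF trivial_limit_at_top_linorder])
qed

section \<open>The RBF kernel\<close>

lemma RBF_coefficient_product:
  assumes "\<gamma> > 0"
  shows "sqrt (2 ^ n / (\<gamma> ^ (2 * n) * fact n)) * (2 ^ n * fact n) powr (-1/2) = 1 / (\<gamma> ^ n * fact n)"
proof -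
  have "(2 ^ n * fact n) powr (-1/2) = 1 / sqrt ((2::real) ^ n * fact n)"
    by (simp add: powr_minus_divide powr_half_sqrt flip: powr_minus)
  then have "sqrt (2 ^ n / (\<gamma> ^ (2 * n) * fact n)) * (2 ^ n * fact n) powr (-1/2)
      = sqrt (2 ^ n / (\<gamma> ^ (2 * n) * fact n)) / sqrt (2 ^ n * fact n)"
    by simp
  also have "\<dots> = sqrt (2 ^ n / (\<gamma> ^ (2 * n) * fact n) / (2 ^ n * fact n))"
    by (rule real_sqrt_divide[symmetric])
  also have "2 ^ n / (\<gamma> ^ (2 * n) * fact n) / (2 ^ n * fact n) = (1 / (\<gamma> ^ n * fact n))\<^sup>2"
    by (simp add: power_mult power2_eq_square field_simps power_mult_distrib)
  finally show ?thesis
    using assms by simp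
qed

lemma e_fun_mult_psi_fun:
  assumes "\<gamma> > 0"
  shows "e_fun \<gamma> n z * of_real (psi_fun (2 / \<gamma>\<^sup>2) n x) =
    of_real ((2 / \<gamma>\<^sup>2 / pi) powr (1/4)) * exp (- z\<^sup>2 / of_real (\<gamma>\<^sup>2)) * of_real (exp (- (2 / \<gamma>\<^sup>2) * x\<^sup>2 / 2))
    * (chermite n (of_real (sqrt (2 / \<gamma>\<^sup>2) * x)) / fact n * (z / of_real \<gamma>) ^ n)"
proof -
  have coefficient: "of_real (sqrt (2 ^ n / (\<gamma> ^ (2 * n) * fact n))) * of_real ((2 ^ n * fact n) powr (-1/2))
      = (1 / (of_real \<gamma> ^ n * fact n) :: complex)"
    by (simp only: of_real_mult[symmetric] RBF_coefficient_product[OF assms]) simp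
  have "e_fun \<gamma> n z * of_real (psi_fun (2 / \<gamma>\<^sup>2) n x) =
      (of_real (sqrt (2 ^ n / (\<gamma> ^ (2 * n) * fact n))) * of_real ((2 ^ n * fact n) powr (-1/2))) *
      (of_real ((2 / \<gamma>\<^sup>2 / pi) powr (1/4)) * exp (- z\<^sup>2 / of_real (\<gamma>\<^sup>2)) *
        of_real (exp (- (2 / \<gamma>\<^sup>2) * x\<^sup>2 / 2))) *
      (chermite n (of_real (sqrt (2 / \<gamma>\<^sup>2) * x)) * z ^ n)"
    unfolding e_fun_def psi_fun_def chermite_of_real by (simp add: mult_ac)
  then show ?thesis
    unfolding coefficient using assms by (simp add: power_divide)
qed

lemma RBF_kernel_eq_gaussian:
  assumes "\<gamma> > 0"
  shows "RBF_kernel \<gamma> z x = of_real ((2 / \<gamma>\<^sup>2 / pi) powr (1/4)) * exp (- 2 * z\<^sup>2 / of_real (\<gamma>\<^sup>2)) *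
    gaussian (2 / \<gamma>\<^sup>2) (2 * of_real (sqrt 2) * z / of_real (\<gamma>\<^sup>2)) x"
proof -
  define Y T :: complex where "Y = of_real (sqrt (2 / \<gamma>\<^sup>2) * x)" and "T = z / of_real \<gamma>"
  define C where "C = of_real ((2 / \<gamma>\<^sup>2 / pi) powr (1/4)) * exp (- z\<^sup>2 / of_real (\<gamma>\<^sup>2)) *
    of_real (exp (- (2 / \<gamma>\<^sup>2) * x\<^sup>2 / 2))"
  have "(\<lambda>n. e_fun \<gamma> n z * of_real (psi_fun (2 / \<gamma>\<^sup>2) n x)) sums (C * exp (2 * Y * T - T\<^sup>2))"
    unfolding e_fun_mult_psi_fun[OF assms] C_def Y_def T_def
    by (rule sums_mult[OF chermite_generating_function])
  then have "RBF_kernel \<gamma> z x = C * exp (2 * Y * T - T\<^sup>2)"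
    unfolding RBF_kernel_def by (rule sums_unique[symmetric])
  also have "\<dots> = of_real ((2 / \<gamma>\<^sup>2 / pi) powr (1/4)) *
      exp (- z\<^sup>2 / of_real (\<gamma>\<^sup>2) + of_real (- (2 / \<gamma>\<^sup>2) * x\<^sup>2 / 2) + (2 * Y * T - T\<^sup>2))"
    unfolding C_def by (simp only: exp_add exp_of_real mult.assoc)
  also have "- z\<^sup>2 / of_real (\<gamma>\<^sup>2) + of_real (- (2 / \<gamma>\<^sup>2) * x\<^sup>2 / 2) + (2 * Y * T - T\<^sup>2) =
      - 2 * z\<^sup>2 / of_real (\<gamma>\<^sup>2) + (- (of_real (2 / \<gamma>\<^sup>2) * (of_real x)\<^sup>2) / 2 +
        2 * of_real (sqrt 2) * z / of_real (\<gamma>\<^sup>2) * of_real x)"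
  proof -
    have root: "sqrt (2 / \<gamma>\<^sup>2) = sqrt 2 / \<gamma>"
      using assms by (simp add: real_sqrt_divide)
    show ?thesis
      unfolding Y_def T_def root using assms by (simp add: field_simps power2_eq_square)
  qed
  finally show ?thesis
    unfolding gaussian_def exp_add by (simp only: mult.assoc)
qed

lemma RBF_kernel_L2R:
  assumes "\<gamma> > 0"
  shows "integrable lborel (RBF_kernel \<gamma> z)" and "RBF_kernel \<gamma> z \<in> L2R"
proof -
  define K :: complex where "K = of_real ((2 / \<gamma>\<^sup>2 / pi) powr (1/4)) * exp (- 2 * z\<^sup>2 / of_real (\<gamma>\<^sup>2))"
  define b where "b = 2 * of_real (sqrt 2) * z / of_real (\<gamma>\<^sup>2)"
  have kernel: "RBF_kernel \<gamma> z = (\<lambda>x. K * gaussian (2 / \<gamma>\<^sup>2) b x)"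
    by (simp add: fun_eq_iff RBF_kernel_eq_gaussian[OF assms] K_def b_def)
  have "2 / \<gamma>\<^sup>2 > 0"
    using assms by simp
  then show "integrable lborel (RBF_kernel \<gamma> z)" and "RBF_kernel \<gamma> z \<in> L2R"
    unfolding kernel by (rule integrable_mult_right[OF integrable_gaussian] L2R_mult_left[OF gaussian_L2R])+
qed

lemma fourier_integral_RBF_kernel:
  assumes "\<gamma> > 0"
  shows "of_real (sqrt (2 / \<gamma>\<^sup>2 / (2 * pi))) * fourier_integral (2 / \<gamma>\<^sup>2) (RBF_kernel \<gamma> z) x =
    exp (- z\<^sup>2 / of_real (\<gamma>\<^sup>2)) * (exp ((- \<i> * z)\<^sup>2 / of_real (\<gamma>\<^sup>2)) * RBF_kernel \<gamma> (- \<i> * z) x)"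
proof -
  define \<alpha> where "\<alpha> = 2 / \<gamma>\<^sup>2"
  define C :: complex where "C = of_real ((\<alpha> / pi) powr (1/4))"
  define b where "b = 2 * of_real (sqrt 2) * z / of_real (\<gamma>\<^sup>2)"
  have "\<alpha> > 0"
    using assms by (simp add: \<alpha>_def)
  have sqrt2: "(of_real (sqrt 2) :: complex)\<^sup>2 = 2"
    by (simp flip: of_real_power)
  have "of_real (sqrt (\<alpha> / (2 * pi))) * fourier_integral \<alpha> (RBF_kernel \<gamma> z) x =
      C * exp (- 2 * z\<^sup>2 / of_real (\<gamma>\<^sup>2)) *
        (of_real (sqrt (\<alpha> / (2 * pi)) * sqrt (2 * pi / \<alpha>)) * exp ((b - \<i> * of_real (\<alpha> * x))\<^sup>2 / (2 * of_real \<alpha>)))"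
    unfolding RBF_kernel_eq_gaussian[OF assms, abs_def] fourier_integral_mult_left
      fourier_integral_gaussian[OF \<open>\<alpha> > 0\<close>] \<alpha>_def[symmetric] C_def[symmetric] b_def[symmetric]
    by (simp add: mult_ac)
  also have "\<dots> = C * exp (- 2 * z\<^sup>2 / of_real (\<gamma>\<^sup>2) + (b - \<i> * of_real (\<alpha> * x))\<^sup>2 / (2 * of_real \<alpha>))"
  proof -
    have "sqrt (\<alpha> / (2 * pi)) * sqrt (2 * pi / \<alpha>) = 1"
      using \<open>\<alpha> > 0\<close> by (simp flip: real_sqrt_mult)
    then show ?thesis
      by (simp only: of_real_1 mult_1_left mult.assoc exp_add)
  qed
  also have "- 2 * z\<^sup>2 / of_real (\<gamma>\<^sup>2) + (b - \<i> * of_real (\<alpha> * x))\<^sup>2 / (2 * of_real \<alpha>) =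
      - (of_real \<alpha> * (of_real x)\<^sup>2) / 2 + (- \<i> * b) * of_real x"
    using assms by (simp add: \<alpha>_def b_def field_simps power2_eq_square sqrt2[unfolded power2_eq_square])
  also have "C * exp (- (of_real \<alpha> * (of_real x)\<^sup>2) / 2 + (- \<i> * b) * of_real x) =
      exp (- z\<^sup>2 / of_real (\<gamma>\<^sup>2)) * (exp ((- \<i> * z)\<^sup>2 / of_real (\<gamma>\<^sup>2)) * RBF_kernel \<gamma> (- \<i> * z) x)"
  proof -
    have "exp (- z\<^sup>2 / of_real (\<gamma>\<^sup>2)) * (exp ((- \<i> * z)\<^sup>2 / of_real (\<gamma>\<^sup>2)) * exp (- 2 * (- \<i> * z)\<^sup>2 / of_real (\<gamma>\<^sup>2))) = 1"
      by (simp add: power_mult_distrib flip: exp_add)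
    then show ?thesis
      unfolding RBF_kernel_eq_gaussian[OF assms] gaussian_def \<alpha>_def C_def b_def
      by (simp add: mult_ac)
  qed
  finally show ?thesis
    unfolding \<alpha>_def .
qed

theorem mainTheorem18:
  fixes \<gamma> :: real and f :: "complex \<Rightarrow> complex" and \<phi> \<psi> :: "real \<Rightarrow> complex"
  assumes "\<gamma> > 0"
    and "f \<in> H_space \<gamma>"
    and "\<phi> \<in> L2R" and "RBF_SB \<gamma> \<phi> = f"
    and "fourier_L2 (2 / \<gamma>\<^sup>2) \<phi> \<psi>"
  shows "RBF_SB \<gamma> \<psi> = M_RBF_inv \<gamma> (comp_op (\<lambda>z. - \<i> * z) (M_RBF \<gamma> f))"
proof (rule ext)
  fix z
  have "2 / \<gamma>\<^sup>2 > 0"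
    using \<open>\<gamma> > 0\<close> by simp
  have "RBF_SB \<gamma> \<psi> z = (LINT t|lborel. RBF_kernel \<gamma> z t * \<psi> t)"
    unfolding RBF_SB_def ..
  also have "\<dots> = (LINT x|lborel. of_real (sqrt (2 / \<gamma>\<^sup>2 / (2 * pi))) *
      fourier_integral (2 / \<gamma>\<^sup>2) (RBF_kernel \<gamma> z) x * \<phi> x)"
    by (rule integral_mult_fourier_L2[OF \<open>2 / \<gamma>\<^sup>2 > 0\<close> assms(5,3) RBF_kernel_L2R[OF \<open>\<gamma> > 0\<close>]])
  also have "\<dots> = (LINT x|lborel. exp (- z\<^sup>2 / of_real (\<gamma>\<^sup>2)) *
      (exp ((- \<i> * z)\<^sup>2 / of_real (\<gamma>\<^sup>2)) * RBF_kernel \<gamma> (- \<i> * z) x) * \<phi> x)"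
    unfolding fourier_integral_RBF_kernel[OF \<open>\<gamma> > 0\<close>] ..
  also have "\<dots> = exp (- z\<^sup>2 / of_real (\<gamma>\<^sup>2)) * (exp ((- \<i> * z)\<^sup>2 / of_real (\<gamma>\<^sup>2)) * RBF_SB \<gamma> \<phi> (- \<i> * z))"
    by (simp add: RBF_SB_def mult.assoc)
  finally show "RBF_SB \<gamma> \<psi> z = M_RBF_inv \<gamma> (comp_op (\<lambda>z. - \<i> * z) (M_RBF \<gamma> f)) z"
    unfolding M_RBF_inv_def comp_op_def M_RBF_def \<open>RBF_SB \<gamma> \<phi> = f\<close> .
qed

end
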